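(* Let $B$ be a unital $C^*$-algebra with a $*$-isomorphism $\psi:B\to M_n\otimes B$ satisfying $\psi(1)=I_n\otimes1$. Then for all $m\ge1$, $1\le i,j\le n$ and $b,c\in B$: $\chi_{mij}(\sigma_m(b)\,c)=b\,\chi_{mij}(c)$ and $\chi_{mij}(c\,\sigma_m(b))=\chi_{mij}(c)\,b$.
   Context: $M_n=M_n(\mathbb{C})$, matrix units $E_{kl}$, identity $I_n$. Define $\psi_0=\mathrm{id}_B$, $\psi_{m+1}=(\mathrm{id}^{\otimes m}\otimes\psi)\circ\psi_m:B\to M_n^{\otimes(m+1)}\otimes B$. With $f(b)=I_n\otimes b$, for $m\ge1$ let $\sigma_m=\psi_m^{-1}\circ(\mathrm{id}^{\otimes(m-1)}\otimes f)\circ\psi_{m-1}:B\to B$. Let $e_{ij}:M_n\to\mathbb{C}$ be the linear functional $e_{ij}(E_{kl})=\delta_{ik}\delta_{jl}$, and for $m\ge1$ let $\chi_{mij}=\psi_{m-1}^{-1}\circ(\mathrm{id}^{\otimes(m-1)}\otimes e_{ij}\otimes\mathrm{id}_B)\circ\psi_m:B\to B$, where $\mathrm{id}^{\otimes(m-1)}\otimes e_{ij}\otimes\mathrm{id}_B:M_n^{\otimes m}\otimes B\to M_n^{\otimes(m-1)}\otimes B$ is the slice map on the $m$-th tensor factor. *)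

theory Defs
  imports "HOL-Analysis.Analysis"
begin

class cstar_algebra = real_normed_algebra_1 + banach +
  fixes scaleC :: "complex \<Rightarrow> 'a \<Rightarrow> 'a"
    and cstar :: "'a \<Rightarrow> 'a"
  assumes scaleC_add_right: "scaleC c (x + y) = scaleC c x + scaleC c y"
    and scaleC_add_left: "scaleC (c + d) x = scaleC c x + scaleC d x"
    and scaleC_scaleC: "scaleC c (scaleC d x) = scaleC (c * d) x"
    and scaleC_one: "scaleC 1 x = x"
    and scaleR_scaleC: "scaleR r x = scaleC (complex_of_real r) x"
    and mult_scaleC_left: "scaleC c x * y = scaleC c (x * y)"
    and mult_scaleC_right: "x * scaleC c y = scaleC c (x * y)"
    and norm_scaleC: "norm (scaleC c x) = cmod c * norm x"
    and cstar_cstar: "cstar (cstar x) = x"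
    and cstar_add: "cstar (x + y) = cstar x + cstar y"
    and cstar_scaleC: "cstar (scaleC c x) = scaleC (cnj c) (cstar x)"
    and cstar_mult: "cstar (x * y) = cstar y * cstar x"
    and cstar_identity: "norm (cstar x * x) = (norm x)\<^sup>2"

text \<open>M_n \<otimes> B is identified with M_n(B): an element \<Sum> E_kl \<otimes> b_kl is the function
(k,l) \<mapsto> b_kl, indices ranging over a finite type 'n with CARD('n) = n.\<close>

definition star_iso_Mn :: "('b::cstar_algebra \<Rightarrow> ('n::finite \<Rightarrow> 'n \<Rightarrow> 'b)) \<Rightarrow> bool" where
  "star_iso_Mn psi \<longleftrightarrow>
     (\<forall>b c. psi (b + c) = (\<lambda>k l. psi b k l + psi c k l)) \<and>
     (\<forall>z b. psi (scaleC z b) = (\<lambda>k l. scaleC z (psi b k l))) \<and>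
     (\<forall>b c. psi (b * c) = (\<lambda>k l. \<Sum>r\<in>UNIV. psi b k r * psi c r l)) \<and>
     (\<forall>b. psi (cstar b) = (\<lambda>k l. cstar (psi b l k))) \<and>
     bij psi"

text \<open>An element \<Sum> E_{k1 l1} \<otimes> ... \<otimes> E_{km lm} \<otimes> b is represented as a function
of the multi-indices (ks, ls) (lists of length m), which vanishes on lists of other lengths.
The last list entry corresponds to the m-th tensor factor.\<close>

fun psi_pow :: "('b::zero \<Rightarrow> ('n \<Rightarrow> 'n \<Rightarrow> 'b)) \<Rightarrow> nat \<Rightarrow> 'b \<Rightarrow> ('n list \<Rightarrow> 'n list \<Rightarrow> 'b)" where
  "psi_pow psi 0 b = (\<lambda>ks ls. if ks = [] \<and> ls = [] then b else 0)"
| "psi_pow psi (Suc m) b = (\<lambda>ks ls.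
      if length ks = Suc m \<and> length ls = Suc m
      then psi (psi_pow psi m b (butlast ks) (butlast ls)) (last ks) (last ls)
      else 0)"

text \<open>id^{\<otimes>m} \<otimes> f with f(b) = I_n \<otimes> b : M_n^{\<otimes>m}\<otimes>B \<rightarrow> M_n^{\<otimes>(m+1)}\<otimes>B.\<close>
definition lift_id :: "nat \<Rightarrow> ('n list \<Rightarrow> 'n list \<Rightarrow> 'b::zero) \<Rightarrow> ('n list \<Rightarrow> 'n list \<Rightarrow> 'b)" where
  "lift_id m Y = (\<lambda>ks ls.
      if length ks = Suc m \<and> length ls = Suc m
      then (if last ks = last ls then Y (butlast ks) (butlast ls) else 0)
      else 0)"

text \<open>id^{\<otimes>m} \<otimes> e_ij \<otimes> id_B : M_n^{\<otimes>(m+1)}\<otimes>B \<rightarrow> M_n^{\<otimes>m}\<otimes>B (slice on the (m+1)-th factor).\<close>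
definition slice :: "nat \<Rightarrow> 'n \<Rightarrow> 'n \<Rightarrow> ('n list \<Rightarrow> 'n list \<Rightarrow> 'b::zero) \<Rightarrow> ('n list \<Rightarrow> 'n list \<Rightarrow> 'b)" where
  "slice m i j X = (\<lambda>ks ls. if length ks = m \<and> length ls = m then X (ks @ [i]) (ls @ [j]) else 0)"

definition sigma :: "('b::zero \<Rightarrow> ('n \<Rightarrow> 'n \<Rightarrow> 'b)) \<Rightarrow> nat \<Rightarrow> 'b \<Rightarrow> 'b" where
  "sigma psi m b = inv_into UNIV (psi_pow psi m) (lift_id (m - 1) (psi_pow psi (m - 1) b))"

definition chi :: "('b::zero \<Rightarrow> ('n \<Rightarrow> 'n \<Rightarrow> 'b)) \<Rightarrow> nat \<Rightarrow> 'n \<Rightarrow> 'n \<Rightarrow> 'b \<Rightarrow> 'b" where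
  "chi psi m i j c = inv_into UNIV (psi_pow psi (m - 1)) (slice (m - 1) i j (psi_pow psi m c))"

end

theory Submission
  imports Defs
begin

text \<open>Under the iterated isomorphism \<open>\<psi>\<^sub>m\<close>, multiplication in \<open>B\<close> becomes block-matrix
multiplication over multi-indices, \<open>\<sigma>\<^sub>m(b)\<close> becomes the block-diagonal matrix \<open>\<psi>\<^sub>m\<^sub>-\<^sub>1(b) \<otimes> I\<^sub>n\<close>
and \<open>\<chi>\<^sub>m\<^sub>i\<^sub>j\<close> extracts the \<open>(i,j)\<close> block in the last tensor factor. Extracting a block of a
product with a block-diagonal factor commutes with multiplying by that factor's diagonal
block, and pulling back along the injective \<open>\<psi>\<^sub>m\<^sub>-\<^sub>1\<close> gives both identities.\<close>

definition tensor_mult ::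
    "nat \<Rightarrow> ('n::finite list \<Rightarrow> 'n list \<Rightarrow> 'b::semiring_0) \<Rightarrow> ('n list \<Rightarrow> 'n list \<Rightarrow> 'b)
      \<Rightarrow> ('n list \<Rightarrow> 'n list \<Rightarrow> 'b)" where
  "tensor_mult m X Y = (\<lambda>ks ls. if length ks = m \<and> length ls = m
      then \<Sum>rs\<in>{rs. length rs = m}. X ks rs * Y rs ls else 0)"

lemma psi_pow_eq_0:
  "\<not> (length ks = m \<and> length ls = m) \<Longrightarrow> psi_pow psi m b ks ls = 0"
  by (cases m) auto

lemma sum_lists_length_Suc:
  "(\<Sum>rs\<in>{rs::'n::finite list. length rs = Suc m}. f rs)
     = (\<Sum>rs\<in>{rs. length rs = m}. \<Sum>r\<in>UNIV. f (rs @ [r]))"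
proof -
  let ?snoc = "\<lambda>(rs, r). rs @ [r]"
  have "{rs::'n list. length rs = Suc m} = ?snoc ` ({rs. length rs = m} \<times> UNIV)"
  proof (intro set_eqI iffI)
    fix xs :: "'n list"
    assume "xs \<in> {rs. length rs = Suc m}"
    then have "xs = ?snoc (butlast xs, last xs)" "length (butlast xs) = m"
      by (auto intro: append_butlast_last_id[symmetric])
    then show "xs \<in> ?snoc ` ({rs. length rs = m} \<times> UNIV)"
      by blast
  qed auto
  moreover have "inj_on ?snoc ({rs::'n list. length rs = m} \<times> UNIV)"
    by (auto simp: inj_on_def)
  ultimately have "(\<Sum>rs\<in>{rs. length rs = Suc m}. f rs)
      = (\<Sum>(rs, r)\<in>{rs. length rs = m} \<times> UNIV. f (rs @ [r]))"
    by (simp add: sum.reindex case_prod_unfold)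
  then show ?thesis
    by (simp add: sum.cartesian_product)
qed

lemma psi_pow_mult:
  fixes psi :: "'b::ring \<Rightarrow> ('n::finite \<Rightarrow> 'n \<Rightarrow> 'b)"
  assumes additive: "\<And>k l. Modules.additive (\<lambda>b. psi b k l)"
    and mult: "\<And>b c. psi (b * c) = (\<lambda>k l. \<Sum>r\<in>UNIV. psi b k r * psi c r l)"
  shows "psi_pow psi m (b * c) = tensor_mult m (psi_pow psi m b) (psi_pow psi m c)"
proof (induction m)
  case 0
  have "{rs::'n list. length rs = 0} = {[]}"
    by auto
  then show ?case
    by (simp add: tensor_mult_def fun_eq_iff)
next
  case (Suc m)
  let ?B = "psi_pow psi m b" and ?C = "psi_pow psi m c"
  have "psi_pow psi (Suc m) (b * c) ks ls = tensor_mult (Suc m) (psi_pow psi (Suc m) b)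
          (psi_pow psi (Suc m) c) ks ls"
    if lengths: "length ks = Suc m" "length ls = Suc m" for ks ls
  proof -
    let ?ks = "butlast ks" and ?ls = "butlast ls"
    have "psi_pow psi (Suc m) (b * c) ks ls
        = psi (\<Sum>rs\<in>{rs. length rs = m}. ?B ?ks rs * ?C rs ?ls) (last ks) (last ls)"
      using lengths by (simp add: Suc.IH tensor_mult_def)
    also have "\<dots> = (\<Sum>rs\<in>{rs. length rs = m}. \<Sum>r\<in>UNIV.
        psi (?B ?ks rs) (last ks) r * psi (?C rs ?ls) r (last ls))"
      by (simp add: Modules.additive.sum[OF additive] mult)
    also have "\<dots> = (\<Sum>rs\<in>{rs. length rs = m}. \<Sum>r\<in>UNIV.
        psi_pow psi (Suc m) b ks (rs @ [r]) * psi_pow psi (Suc m) c (rs @ [r]) ls)"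
      using lengths by simp
    also have "\<dots> = tensor_mult (Suc m) (psi_pow psi (Suc m) b) (psi_pow psi (Suc m) c) ks ls"
      using lengths by (simp add: tensor_mult_def sum_lists_length_Suc)
    finally show ?thesis .
  qed
  then show ?case
    by (auto simp: fun_eq_iff tensor_mult_def psi_pow_eq_0)
qed

lemma inj_psi_pow:
  assumes "inj psi"
  shows "inj (psi_pow psi m)"
proof (induction m)
  case 0
  show ?case
    by (rule injI) (metis psi_pow.simps(1))
next
  case (Suc m)
  show ?case
  proof (rule injI)
    fix x y
    assume eq: "psi_pow psi (Suc m) x = psi_pow psi (Suc m) y"
    have "psi_pow psi m x ks ls = psi_pow psi m y ks ls"
      if "length ks = m" "length ls = m" for ks ls
    proof -
      have "psi (psi_pow psi m x ks ls) k l = psi (psi_pow psi m y ks ls) k l" for k l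
        using fun_cong[OF fun_cong[OF eq, of "ks @ [k]"], of "ls @ [l]"] that by simp
      then have "psi (psi_pow psi m x ks ls) = psi (psi_pow psi m y ks ls)"
        by (intro ext)
      with \<open>inj psi\<close> show ?thesis
        by (rule injD)
    qed
    then have "psi_pow psi m x = psi_pow psi m y"
      by (intro ext) (metis psi_pow_eq_0)
    with Suc.IH show "x = y"
      by (rule injD)
  qed
qed

lemma range_psi_powI:
  assumes "surj psi"
    and "\<And>ks ls. \<not> (length ks = m \<and> length ls = m) \<Longrightarrow> Z ks ls = 0"
  shows "Z \<in> range (psi_pow psi m)"
  using assms(2)
proof (induction m arbitrary: Z)
  case 0
  then have "psi_pow psi 0 (Z [] []) = Z"
    by (auto simp: fun_eq_iff)
  then show ?case
    by (metis rangeI)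
next
  case (Suc m)
  define W where "W = (\<lambda>ks ls. if length ks = m \<and> length ls = m
      then inv psi (\<lambda>k l. Z (ks @ [k]) (ls @ [l])) else 0)"
  have "W \<in> range (psi_pow psi m)"
    by (rule Suc.IH) (auto simp: W_def)
  then obtain x where x: "psi_pow psi m x = W"
    by blast
  have "psi_pow psi (Suc m) x ks ls = Z ks ls" if "length ks = Suc m" "length ls = Suc m"
    for ks ls
  proof -
    have "psi_pow psi (Suc m) x ks ls = Z (butlast ks @ [last ks]) (butlast ls @ [last ls])"
      using that by (simp add: x W_def surj_f_inv_f[OF \<open>surj psi\<close>])
    also have "\<dots> = Z ks ls"
      using that by (simp add: append_butlast_last_id flip: length_greater_0_conv)
    finally show ?thesis .
  qed
  then have "psi_pow psi (Suc m) x = Z"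
    using Suc.prems by (metis psi_pow_eq_0 ext)
  then show ?case
    by (metis rangeI)
qed

lemma psi_pow_inv_into:
  assumes "surj psi"
    and "\<And>ks ls. \<not> (length ks = m \<and> length ls = m) \<Longrightarrow> Z ks ls = 0"
  shows "psi_pow psi m (inv_into UNIV (psi_pow psi m) Z) = Z"
  using range_psi_powI[of psi m Z] assms by (blast intro: f_inv_into_f)

lemma psi_pow_sigma:
  assumes "surj psi"
  shows "psi_pow psi (Suc m) (sigma psi (Suc m) b) = lift_id m (psi_pow psi m b)"
  unfolding sigma_def diff_Suc_1
  by (rule psi_pow_inv_into[OF assms]) (auto simp: lift_id_def)

lemma psi_pow_chi:
  assumes "surj psi"
  shows "psi_pow psi m (chi psi (Suc m) i j c) = slice m i j (psi_pow psi (Suc m) c)"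
  unfolding chi_def diff_Suc_1
  by (rule psi_pow_inv_into[OF assms]) (auto simp: slice_def)

lemma slice_tensor_mult_lift_id_left:
  fixes X Y :: "'n::finite list \<Rightarrow> 'n list \<Rightarrow> 'b::semiring_0"
  shows "slice m i j (tensor_mult (Suc m) (lift_id m X) Y) = tensor_mult m X (slice m i j Y)"
proof (intro ext)
  fix ks ls :: "'n list"
  have "(\<Sum>rs\<in>{rs. length rs = Suc m}. lift_id m X (ks @ [i]) rs * Y rs (ls @ [j]))
      = (\<Sum>rs\<in>{rs. length rs = m}. X ks rs * Y (rs @ [i]) (ls @ [j]))"
    if "length ks = m"
    using that by (simp add: sum_lists_length_Suc lift_id_def if_distrib[of "\<lambda>x. x * _"]
        cong: if_cong)
  then show "slice m i j (tensor_mult (Suc m) (lift_id m X) Y) ks ls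
      = tensor_mult m X (slice m i j Y) ks ls"
    by (simp add: slice_def tensor_mult_def)
qed

lemma slice_tensor_mult_lift_id_right:
  fixes X Y :: "'n::finite list \<Rightarrow> 'n list \<Rightarrow> 'b::semiring_0"
  shows "slice m i j (tensor_mult (Suc m) Y (lift_id m X)) = tensor_mult m (slice m i j Y) X"
proof (intro ext)
  fix ks ls :: "'n list"
  have "(\<Sum>rs\<in>{rs. length rs = Suc m}. Y (ks @ [i]) rs * lift_id m X rs (ls @ [j]))
      = (\<Sum>rs\<in>{rs. length rs = m}. Y (ks @ [i]) (rs @ [j]) * X rs ls)"
    if "length ls = m"
    using that by (simp add: sum_lists_length_Suc lift_id_def if_distrib[of "\<lambda>x. _ * x"]
        cong: if_cong)
  then show "slice m i j (tensor_mult (Suc m) Y (lift_id m X)) ks ls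
      = tensor_mult m (slice m i j Y) X ks ls"
    by (simp add: slice_def tensor_mult_def)
qed

theorem corollary3p2:
  fixes psi :: "'b::cstar_algebra \<Rightarrow> ('n::finite \<Rightarrow> 'n \<Rightarrow> 'b)"
  assumes iso: "star_iso_Mn psi"
    and unit: "psi 1 = (\<lambda>k l. if k = l then 1 else 0)"
    and m: "m \<ge> 1"
  shows "chi psi m i j (sigma psi m b * c) = b * chi psi m i j c
       \<and> chi psi m i j (c * sigma psi m b) = chi psi m i j c * b"
proof -
  obtain p where p: "m = Suc p"
    using m by (cases m) auto
  have additive: "Modules.additive (\<lambda>b. psi b k l)" for k l
    using iso by (intro Modules.additive.intro) (simp add: star_iso_Mn_def)
  have mult: "psi (b * c) = (\<lambda>k l. \<Sum>r\<in>UNIV. psi b k r * psi c r l)" for b c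
    using iso by (simp add: star_iso_Mn_def)
  have "inj psi" "surj psi"
    using iso by (simp_all add: star_iso_Mn_def bij_is_inj bij_is_surj)
  have "psi_pow psi p (chi psi m i j (sigma psi m b * c)) = psi_pow psi p (b * chi psi m i j c)"
    "psi_pow psi p (chi psi m i j (c * sigma psi m b)) = psi_pow psi p (chi psi m i j c * b)"
    by (simp_all only: p psi_pow_mult[OF additive mult] psi_pow_sigma[OF \<open>surj psi\<close>]
        psi_pow_chi[OF \<open>surj psi\<close>] slice_tensor_mult_lift_id_left
        slice_tensor_mult_lift_id_right)
  then show ?thesis
    using inj_psi_pow[OF \<open>inj psi\<close>] by (simp add: inj_eq)
qed

end
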